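(* For every integer $k\ge 0$, $$\varphi(2k):=\int_0^1t^{2k}\sqrt{1+t^2}\,\mathrm{d}t=\frac{(-1)^k}{4^k} \frac{\binom{2k}{k}}{k+1}\left(I(0)+\sqrt{2}\sum_{p=1}^k\frac{(-1)^p4^p}{\binom{2p}{p}}\right),$$ where $I(0)=\frac{\sqrt{2}}{2}+\frac{\ln(1+\sqrt{2})}{2}$. *)

theory Defs
  imports "HOL-Analysis.Analysis"
begin

end

theory Submission
  imports Defs
begin

text \<open>
  Write \<open>\<phi>(n) = \<integral>\<^sub>0\<^sup>1 t^n \<surd>(1 + t^2) dt\<close>. Differentiating \<open>t^(n+1) (1 + t^2)^(3/2)\<close> gives
  \<open>(n + 1) t^n \<surd>(1 + t^2) + (n + 4) t^(n+2) \<surd>(1 + t^2)\<close>, so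
  \<open>(n + 1) \<phi>(n) + (n + 4) \<phi>(n + 2) = 2\<surd>2\<close>. On even indices this is a first-order linear
  recurrence whose homogeneous solution is \<open>c\<^sub>k = (-1)^k C(2k,k) / (4^k (k + 1))\<close>; variation of
  constants expresses \<open>\<phi>(2k)\<close> through \<open>c\<^sub>k\<close>, the initial value \<open>\<phi>(0)\<close> (an arsinh integral)
  and the sum of the inhomogeneous terms divided by \<open>c\<^sub>p\<close>.
\<close>

lemma has_real_derivative_sqrt_one_plus_square:
  "((\<lambda>t::real. sqrt (1 + t^2)) has_real_derivative x / sqrt (1 + x^2)) (at x within S)"
proof -
  have inner: "((\<lambda>t::real. 1 + t^2) has_real_derivative 2 * x) (at x within S)"
    by (auto intro!: derivative_eq_intros)
  have "1 + x^2 > 0"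
    by (simp add: add_pos_nonneg)
  from DERIV_chain2[OF DERIV_real_sqrt[OF this] inner] show ?thesis
    by (simp add: field_simps)
qed

lemma antiderivative_sqrt_one_plus_square:
  "((\<lambda>t::real. (t * sqrt (1 + t^2) + arsinh t) / 2) has_real_derivative sqrt (1 + x^2))
     (at x within S)"
proof -
  have s: "sqrt (1 + x^2) > 0" "sqrt (1 + x^2) ^ 2 = 1 + x^2"
    by (simp_all add: add_pos_nonneg)
  have "((\<lambda>t::real. (t * sqrt (1 + t^2) + arsinh t) / 2) has_real_derivative
      (1 * sqrt (1 + x^2) + x / sqrt (1 + x^2) * x + 1 / sqrt (x^2 + 1)) / 2) (at x within S)"
    by (intro DERIV_cdivide DERIV_add DERIV_mult DERIV_ident
        has_real_derivative_sqrt_one_plus_square arsinh_real_has_field_derivative)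
  moreover have "(1 * sqrt (1 + x^2) + x / sqrt (1 + x^2) * x + 1 / sqrt (x^2 + 1)) / 2
      = sqrt (1 + x^2)"
    using s by (simp add: field_simps add.commute[of "x^2"] power2_eq_square)
  ultimately show ?thesis
    by (rule DERIV_cong)
qed

lemma has_real_derivative_power_times_one_plus_square_three_halves:
  "((\<lambda>t::real. t ^ (n + 1) * (1 + t^2) * sqrt (1 + t^2)) has_real_derivative
      real (n + 1) * (x ^ n * sqrt (1 + x^2)) + real (n + 4) * (x ^ (n + 2) * sqrt (1 + x^2)))
     (at x within S)"
proof -
  have s: "sqrt (1 + x^2) > 0" "sqrt (1 + x^2) ^ 2 = 1 + x^2"
    by (simp_all add: add_pos_nonneg)
  have "((\<lambda>t::real. 1 + t^2) has_real_derivative 2 * x) (at x within S)"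
    by (auto intro!: derivative_eq_intros)
  then have "((\<lambda>t::real. t ^ (n + 1) * (1 + t^2) * sqrt (1 + t^2)) has_real_derivative
      (real (n + 1) * x ^ n * (1 + x^2) + 2 * x * x ^ (n + 1)) * sqrt (1 + x^2)
      + x / sqrt (1 + x^2) * (x ^ (n + 1) * (1 + x^2))) (at x within S)"
    using DERIV_mult[OF DERIV_mult[OF DERIV_pow[where n = "n + 1"]]
        has_real_derivative_sqrt_one_plus_square]
    by simp
  moreover have "(real (n + 1) * x ^ n * (1 + x^2) + 2 * x * x ^ (n + 1)) * sqrt (1 + x^2)
      + x / sqrt (1 + x^2) * (x ^ (n + 1) * (1 + x^2))
      = real (n + 1) * (x ^ n * sqrt (1 + x^2)) + real (n + 4) * (x ^ (n + 2) * sqrt (1 + x^2))"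
    using s by (simp add: field_simps) (simp add: algebra_simps power2_eq_square eval_nat_numeral)
  ultimately show ?thesis
    by (rule DERIV_cong)
qed

lemma central_binomial_Suc:
  "(2 * Suc k choose Suc k) * Suc k = 2 * (2 * k + 1) * (2 * k choose k)"
proof -
  have "(2 * Suc k choose Suc k) * Suc k = Suc (Suc (2 * k)) * (Suc (2 * k) choose k)"
    using Suc_times_binomial_eq[of "Suc (2 * k)" k] by simp
  also have "Suc (2 * k) choose k = Suc (2 * k) choose Suc k"
    using binomial_symmetric[of k "Suc (2 * k)"] by simp
  also have "Suc (Suc (2 * k)) * (Suc (2 * k) choose Suc k)
      = 2 * ((Suc (2 * k) choose Suc k) * Suc k)"
    by simp
  also have "(Suc (2 * k) choose Suc k) * Suc k = Suc (2 * k) * (2 * k choose k)"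
    by (rule Suc_times_binomial_eq[symmetric])
  finally show ?thesis
    by simp
qed

lemma linear_recurrence_closed_form:
  fixes a b c :: "nat \<Rightarrow> 'a::field"
  assumes c: "\<And>k. c k \<noteq> 0"
    and rec: "\<And>k. a (Suc k) = c (Suc k) / c k * a k + b k"
  shows "a k = c k * (a 0 / c 0 + (\<Sum>p<k. b p / c (Suc p)))"
proof (induction k)
  case 0
  show ?case
    using c by simp
next
  case (Suc k)
  have "a (Suc k) = c (Suc k) * (a 0 / c 0 + (\<Sum>p<k. b p / c (Suc p))) + b k"
    using c[of k] by (simp add: rec Suc.IH)
  also have "\<dots> = c (Suc k) * (a 0 / c 0 + (\<Sum>p<Suc k. b p / c (Suc p)))"
    using c[of "Suc k"] by (simp add: distrib_left)
  finally show ?case .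
qed

definition phi :: "nat \<Rightarrow> real" where
  "phi n = integral {0..1} (\<lambda>t. t ^ n * sqrt (1 + t^2))"

lemma phi_has_integral: "((\<lambda>t::real. t ^ n * sqrt (1 + t^2)) has_integral phi n) {0..1}"
  unfolding phi_def
  by (intro integrable_integral integrable_continuous_interval continuous_intros)

lemma phi_0: "phi 0 = (sqrt 2 + ln (1 + sqrt 2)) / 2"
proof -
  let ?F = "\<lambda>t::real. (t * sqrt (1 + t^2) + arsinh t) / 2"
  have "((\<lambda>t. sqrt (1 + t^2)) has_integral ?F 1 - ?F 0) {0..1::real}"
  proof (rule fundamental_theorem_of_calculus)
    show "(?F has_vector_derivative sqrt (1 + x^2)) (at x within {0..1})" for x
      unfolding has_real_derivative_iff_has_vector_derivative[symmetric]
      by (rule antiderivative_sqrt_one_plus_square)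
  qed simp
  then show ?thesis
    using has_integral_unique[OF phi_has_integral[of 0]]
    by (simp add: arsinh_real_def add.commute)
qed

lemma phi_recurrence: "real (n + 1) * phi n + real (n + 4) * phi (n + 2) = 2 * sqrt 2"
proof -
  let ?F = "\<lambda>t::real. t ^ (n + 1) * (1 + t^2) * sqrt (1 + t^2)"
  let ?f = "\<lambda>t::real. real (n + 1) * (t ^ n * sqrt (1 + t^2))
    + real (n + 4) * (t ^ (n + 2) * sqrt (1 + t^2))"
  have "(?f has_integral ?F 1 - ?F 0) {0..1}"
  proof (rule fundamental_theorem_of_calculus)
    show "(?F has_vector_derivative ?f x) (at x within {0..1})" for x
      unfolding has_real_derivative_iff_has_vector_derivative[symmetric]
      by (rule has_real_derivative_power_times_one_plus_square_three_halves)
  qed simp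
  moreover have "(?f has_integral real (n + 1) * phi n + real (n + 4) * phi (n + 2)) {0..1}"
    by (intro has_integral_add has_integral_mult_right phi_has_integral)
  ultimately show ?thesis
    by (simp add: has_integral_unique)
qed

definition phi_coeff :: "nat \<Rightarrow> real" where
  "phi_coeff k = (-1) ^ k / 4 ^ k * (real (2 * k choose k) / real (k + 1))"

lemma phi_coeff_nonzero: "phi_coeff k \<noteq> 0"
  by (simp add: phi_coeff_def)

lemma phi_coeff_Suc: "phi_coeff (Suc k) = - (2 * real k + 1) / (2 * real k + 4) * phi_coeff k"
proof -
  define B where "B = real (2 * k choose k)"
  have "real (2 * Suc k choose Suc k) = 2 * (2 * k + 1) * B / (k + 1)"
    using arg_cong[OF central_binomial_Suc[of k], of real] by (simp add: B_def field_simps)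
  then have "phi_coeff (Suc k)
      = (-1) ^ Suc k / 4 ^ Suc k * (2 * (2 * k + 1) * B / (k + 1) / (k + 2))"
    by (simp add: phi_coeff_def)
  also have "\<dots> = - (2 * real k + 1) / (2 * real k + 4) * ((-1) ^ k / 4 ^ k * (B / (k + 1)))"
    by (simp add: divide_simps) (simp add: algebra_simps)
  finally show ?thesis
    by (simp add: phi_coeff_def B_def)
qed

lemma phi_coeff_inverse:
  "1 / (real (k + 1) * phi_coeff k) = (-1) ^ k * 4 ^ k / real (2 * k choose k)"
proof -
  define B where "B = real (2 * k choose k)"
  have "B > 0"
    by (simp add: B_def)
  have "real (k + 1) * phi_coeff k = (-1) ^ k * B / 4 ^ k"
    by (simp add: phi_coeff_def B_def)
  moreover have "1 / ((-1) ^ k * B / 4 ^ k) = (-1) ^ k * 4 ^ k / B"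
    using \<open>B > 0\<close> by (simp add: divide_simps)
  ultimately show ?thesis
    by (simp add: B_def)
qed

lemma phi_even_Suc:
  "phi (2 * Suc k) = phi_coeff (Suc k) / phi_coeff k * phi (2 * k) + sqrt 2 / real (Suc k + 1)"
proof -
  have ratio: "phi_coeff (Suc k) / phi_coeff k = - (2 * real k + 1) / (2 * real k + 4)"
    using phi_coeff_nonzero[of k] by (simp add: phi_coeff_Suc)
  have solved: "phi (2 * Suc k) = (2 * sqrt 2 - (2 * real k + 1) * phi (2 * k)) / (2 * real k + 4)"
    using phi_recurrence[of "2 * k"] by (simp add: field_simps)
  show ?thesis
    unfolding ratio solved by (simp add: divide_simps) (simp add: algebra_simps)
qed

theorem theorem3p0p3:
  fixes k :: nat
  shows "integral {0..1} (\<lambda>t::real. t ^ (2*k) * sqrt (1 + t^2))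
    = (-1) ^ k / 4 ^ k * (real ((2*k) choose k) / real (k + 1))
      * ((sqrt 2 / 2 + ln (1 + sqrt 2) / 2)
         + sqrt 2 * (\<Sum>p=1..k. (-1) ^ p * 4 ^ p / real ((2*p) choose p)))"
proof -
  have summand: "sqrt 2 / real (Suc p + 1) / phi_coeff (Suc p)
      = sqrt 2 * ((-1) ^ Suc p * 4 ^ Suc p / real (2 * Suc p choose Suc p))" for p
    by (subst phi_coeff_inverse[symmetric]) simp
  have "phi (2 * k) = phi_coeff k * (phi 0 / phi_coeff 0
      + (\<Sum>p<k. sqrt 2 / real (Suc p + 1) / phi_coeff (Suc p)))"
    using linear_recurrence_closed_form[of phi_coeff "\<lambda>k. phi (2 * k)",
        OF phi_coeff_nonzero phi_even_Suc]
    by (simp only: mult_0_right)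
  also have "(\<Sum>p<k. sqrt 2 / real (Suc p + 1) / phi_coeff (Suc p))
      = sqrt 2 * (\<Sum>p=1..k. (-1) ^ p * 4 ^ p / real (2 * p choose p))"
    unfolding summand sum_distrib_left[symmetric]
    by (simp only: One_nat_def sum.atLeast1_atMost_eq)
  finally show ?thesis
    unfolding phi_0 by (simp add: phi_def phi_coeff_def add_divide_distrib)
qed

end
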